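(* If $C$ and $C'$ are two cycle graphs with the same degree sequence, then there exists a u-switch sequence transforming $C$ into $C'$: 2-switches $\tau_1,\dots,\tau_k$ ($k\ge0$) such that, with $C_0=C$ and $C_i=\tau_i(C_{i-1})$, each $\tau_i$ is a u-switch over $C_{i-1}$ and $C_k=C'$.
   Context: Graphs are finite, simple, undirected, labeled with vertex set $[n]$; the degree sequence of $G$ is $(d_1,\dots,d_n)$ with $d_i$ the degree of vertex $i$ (so two graphs have the same degree sequence iff each vertex has the same degree in both). A unicyclic graph is a connected graph with exactly one cycle. For vertices $a,b,c,d$, $A=\binom{a\ b}{c\ d}$ is interchangeable in $G$ if $ab,cd\in E(G)$, $\{a,b\}\cap\{c,d\}=\varnothing$, $ac,bd\notin E(G)$; the 2-switch $\tau_A$ sends $G$ to $G-ab-cd+ac+bd$ if $A$ is interchangeable and to $G$ otherwise (trivial). A nontrivial 2-switch $\tau$ over a unicyclic $U$ is a u-switch if $\tau(U)$ is unicyclic. *)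

theory Defs
  imports Main
begin

definition graph :: "nat \<Rightarrow> nat set set \<Rightarrow> bool" where
  "graph n E \<longleftrightarrow> (\<forall>e\<in>E. \<exists>a b. e = {a,b} \<and> a \<noteq> b \<and> a \<in> {1..n} \<and> b \<in> {1..n})"

definition degree :: "nat set set \<Rightarrow> nat \<Rightarrow> nat" where
  "degree E v = card {e\<in>E. v \<in> e}"

definition same_degree_sequence :: "nat \<Rightarrow> nat set set \<Rightarrow> nat set set \<Rightarrow> bool" where
  "same_degree_sequence n E E' \<longleftrightarrow> (\<forall>v\<in>{1..n}. degree E v = degree E' v)"

definition cycle_edges :: "nat list \<Rightarrow> nat set set" where
  "cycle_edges vs = {{vs ! i, vs ! ((i + 1) mod length vs)} | i. i < length vs}"

definition is_cycle_in :: "nat set set \<Rightarrow> nat set set \<Rightarrow> bool" where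
  "is_cycle_in E C \<longleftrightarrow> (\<exists>vs. distinct vs \<and> length vs \<ge> 3 \<and> C = cycle_edges vs \<and> C \<subseteq> E)"

definition connected_graph :: "nat \<Rightarrow> nat set set \<Rightarrow> bool" where
  "connected_graph n E \<longleftrightarrow>
     (\<forall>u\<in>{1..n}. \<forall>v\<in>{1..n}. (u, v) \<in> {(a, b). {a, b} \<in> E}\<^sup>*)"

definition unicyclic :: "nat \<Rightarrow> nat set set \<Rightarrow> bool" where
  "unicyclic n E \<longleftrightarrow> graph n E \<and> connected_graph n E \<and> (\<exists>!C. is_cycle_in E C)"

definition cycle_graph :: "nat \<Rightarrow> nat set set \<Rightarrow> bool" where
  "cycle_graph n E \<longleftrightarrow>
     (\<exists>vs. distinct vs \<and> set vs = {1..n} \<and> length vs \<ge> 3 \<and> E = cycle_edges vs)"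

(* A = (a b / c d), represented as (a, b, c, d) *)
definition interchangeable :: "nat set set \<Rightarrow> nat \<times> nat \<times> nat \<times> nat \<Rightarrow> bool" where
  "interchangeable E A = (case A of (a, b, c, d) \<Rightarrow>
     {a,b} \<in> E \<and> {c,d} \<in> E \<and> {a,b} \<inter> {c,d} = {} \<and> {a,c} \<notin> E \<and> {b,d} \<notin> E)"

definition two_switch :: "nat \<times> nat \<times> nat \<times> nat \<Rightarrow> nat set set \<Rightarrow> nat set set" where
  "two_switch A E = (case A of (a, b, c, d) \<Rightarrow>
     if interchangeable E A then (E - {{a,b}, {c,d}}) \<union> {{a,c}, {b,d}} else E)"

definition u_switch :: "nat \<Rightarrow> nat set set \<Rightarrow> nat \<times> nat \<times> nat \<times> nat \<Rightarrow> bool" where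
  "u_switch n U A \<longleftrightarrow> unicyclic n U \<and> interchangeable U A \<and> unicyclic n (two_switch A U)"

fun u_switch_seq :: "nat \<Rightarrow> nat set set \<Rightarrow> (nat \<times> nat \<times> nat \<times> nat) list \<Rightarrow> nat set set \<Rightarrow> bool" where
  "u_switch_seq n G [] G' \<longleftrightarrow> G = G'"
| "u_switch_seq n G (A # As) G' \<longleftrightarrow> u_switch n G A \<and> u_switch_seq n (two_switch A G) As G'"

end

theory Submission
  imports Defs
begin

text \<open>A cycle graph on \<open>[n]\<close> is the edge set of a cyclic ordering \<open>v\<^sub>1 \<dots> v\<^sub>n\<close> of the
  vertices. Reversing a segment \<open>P\<close> of the cyclic order (a 2-opt move)
  is a 2-switch: it replaces the two edges leaving \<open>P\<close> by the two edges joining its ends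
  crosswise. The result is again a Hamiltonian cycle, hence unicyclic, so the move is a
  u-switch. Sorting the cyclic order of \<open>C\<close> into that of \<open>C'\<close> by such reversals (rotate so that
  both start at the same vertex, then bring the \<open>k\<close>-th vertex of \<open>C'\<close> into position \<open>k\<close> by
  reversing the segment ending at it) gives the required u-switch sequence.\<close>

fun path_edges :: "'a list \<Rightarrow> 'a set set" where
  "path_edges (x # y # r) = insert {x, y} (path_edges (y # r))"
| "path_edges _ = {}"

lemma finite_path_edges [simp]: "finite (path_edges xs)"
  by (induction xs rule: path_edges.induct) auto

lemma path_edges_subset: "e \<in> path_edges xs \<Longrightarrow> e \<subseteq> set xs"
  by (induction xs rule: path_edges.induct) auto

lemma path_edges_append:
  "xs \<noteq> [] \<Longrightarrow> ys \<noteq> [] \<Longrightarrow>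
    path_edges (xs @ ys) = insert {last xs, hd ys} (path_edges xs \<union> path_edges ys)"
proof (induction xs rule: path_edges.induct)
  case ("2_2" x)
  then show ?case by (cases ys) auto
qed auto

lemma path_edges_rev: "path_edges (rev xs) = path_edges xs"
proof (induction xs rule: path_edges.induct)
  case (1 x y r)
  then show ?case
    using path_edges_append[of "rev r @ [y]" "[x]"] by (auto simp: insert_commute)
qed auto

lemma path_edges_conv_nth: "path_edges xs = (\<lambda>i. {xs ! i, xs ! Suc i}) ` {..<length xs - 1}"
proof (induction xs rule: path_edges.induct)
  case (1 x y r)
  then show ?case by (simp add: lessThan_Suc_eq_insert_0 image_image)
qed auto

lemma cycle_edges_conv_path_edges:
  assumes "vs \<noteq> []"
  shows "cycle_edges vs = insert {last vs, hd vs} (path_edges vs)"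
proof -
  let ?n = "length vs"
  have "{..<?n} = insert (?n - 1) {..<?n - 1}"
    using assms by (cases ?n) (auto simp: lessThan_Suc)
  then have "cycle_edges vs = (\<lambda>i. {vs ! i, vs ! ((i + 1) mod ?n)}) ` insert (?n - 1) {..<?n - 1}"
    unfolding cycle_edges_def setcompr_eq_image by (simp flip: lessThan_def)
  also have "\<dots> = insert {last vs, hd vs} ((\<lambda>i. {vs ! i, vs ! Suc i}) ` {..<?n - 1})"
    using assms by (auto simp: last_conv_nth hd_conv_nth)
  finally show ?thesis by (simp add: path_edges_conv_nth)
qed

lemma distinct_hd_neq_last: "distinct xs \<Longrightarrow> 2 \<le> length xs \<Longrightarrow> hd xs \<noteq> last xs"
  by (cases xs) auto

lemma card_path_edge: "distinct xs \<Longrightarrow> e \<in> path_edges xs \<Longrightarrow> card e = 2"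
  by (induction xs rule: path_edges.induct) auto

lemma path_edges_connected:
  "a \<in> set xs \<Longrightarrow> b \<in> set xs \<Longrightarrow> (a, b) \<in> {(u, v). {u, v} \<in> path_edges xs}\<^sup>*"
proof (induction xs arbitrary: a b rule: path_edges.induct)
  case (1 x y r)
  let ?R = "{(u, v). {u, v} \<in> path_edges (x # y # r)}"
  have "{(u, v). {u, v} \<in> path_edges (y # r)} \<subseteq> ?R" by auto
  then have tail: "(u, v) \<in> ?R\<^sup>*" if "u \<in> set (y # r)" "v \<in> set (y # r)" for u v
    using "1.IH"[OF that] rtrancl_mono by blast
  have "(x, y) \<in> ?R" "(y, x) \<in> ?R" by (auto simp: insert_commute)
  then have "(x, v) \<in> ?R\<^sup>*" "(v, x) \<in> ?R\<^sup>*" if "v \<in> set (y # r)" for v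
    using tail[OF _ that] tail[OF that]
    by (auto intro: converse_rtrancl_into_rtrancl rtrancl_into_rtrancl)
  with "1.prems" tail show ?case by auto
qed auto

lemma cycle_edges_Nil [simp]: "cycle_edges [] = {}"
  by (simp add: cycle_edges_def)

lemma cycle_edges_append_commute: "cycle_edges (xs @ ys) = cycle_edges (ys @ xs)"
  by (cases "xs = [] \<or> ys = []")
    (auto simp: cycle_edges_conv_path_edges path_edges_append)

lemma cycle_edges_rev: "cycle_edges (rev vs) = cycle_edges vs"
  by (cases "vs = []") (auto simp: cycle_edges_conv_path_edges path_edges_rev hd_rev last_rev)

lemma Union_cycle_edges: "\<Union> (cycle_edges vs) = set vs"
proof
  show "\<Union> (cycle_edges vs) \<subseteq> set vs"
    using path_edges_subset
    by (cases "vs = []") (auto simp: cycle_edges_conv_path_edges)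
  show "set vs \<subseteq> \<Union> (cycle_edges vs)"
  proof
    fix v assume "v \<in> set vs"
    then obtain i where "i < length vs" "v = vs ! i" by (auto simp: in_set_conv_nth)
    then show "v \<in> \<Union> (cycle_edges vs)" unfolding cycle_edges_def by blast
  qed
qed

lemma finite_cycle_edges [simp]: "finite (cycle_edges vs)"
  by (cases "vs = []") (auto simp: cycle_edges_conv_path_edges)

lemma card_cycle_edge:
  assumes "distinct vs" "2 \<le> length vs" "e \<in> cycle_edges vs"
  shows "card e = 2"
proof -
  have "vs \<noteq> []" using assms(2) by auto
  then show ?thesis
    using assms card_path_edge[of vs e] distinct_hd_neq_last[of vs]
    by (auto simp: cycle_edges_conv_path_edges)
qed

lemma cycle_edges_connected:
  assumes "a \<in> set vs" "b \<in> set vs"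
  shows "(a, b) \<in> {(u, v). {u, v} \<in> cycle_edges vs}\<^sup>*"
proof -
  have "vs \<noteq> []" using assms by auto
  then have "path_edges vs \<subseteq> cycle_edges vs"
    by (auto simp: cycle_edges_conv_path_edges)
  then have "{(u, v). {u, v} \<in> path_edges vs} \<subseteq> {(u, v). {u, v} \<in> cycle_edges vs}" by auto
  from rtrancl_mono[OF this] show ?thesis using path_edges_connected[OF assms] by blast
qed

lemma degree_cycle_edges:
  assumes "distinct vs" "3 \<le> length vs" "w \<in> set vs"
  shows "degree (cycle_edges vs) w = 2"
proof -
  obtain ys zs where vs: "vs = ys @ w # zs" using split_list[OF assms(3)] by blast
  define r where "r = zs @ ys"
  have r: "distinct (w # r)" "2 \<le> length r" "r \<noteq> []" using assms unfolding vs r_def by auto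
  have "cycle_edges vs = cycle_edges (w # r)"
    unfolding vs r_def using cycle_edges_append_commute[of ys "w # zs"] by simp
  also have "\<dots> = insert {last r, w} (insert {w, hd r} (path_edges r))"
    using r path_edges_append[of "[w]" r] by (auto simp: cycle_edges_conv_path_edges)
  finally have "{e \<in> cycle_edges vs. w \<in> e} = {{last r, w}, {w, hd r}}"
    using r path_edges_subset[of _ r] by auto
  moreover have "hd r \<noteq> last r" "w \<noteq> hd r" using r distinct_hd_neq_last[of r] by auto
  ultimately show ?thesis unfolding degree_def by (auto simp: doubleton_eq_iff)
qed

lemma graph_cycle_edges:
  assumes "distinct vs" "2 \<le> length vs" "set vs \<subseteq> {1..n}"
  shows "graph n (cycle_edges vs)"
  unfolding graph_def
proof
  fix e assume e: "e \<in> cycle_edges vs"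
  then obtain a b where "e = {a, b}" "a \<noteq> b"
    using card_cycle_edge[OF assms(1,2) e] by (auto simp: card_2_iff)
  moreover have "e \<subseteq> {1..n}" using e assms(3) Union_cycle_edges[of vs] by blast
  ultimately show "\<exists>a b. e = {a, b} \<and> a \<noteq> b \<and> a \<in> {1..n} \<and> b \<in> {1..n}" by blast
qed

lemma cycle_edges_unique_cycle:
  assumes "distinct vs" "3 \<le> length vs" "is_cycle_in (cycle_edges vs) C"
  shows "C = cycle_edges vs"
proof -
  let ?E = "cycle_edges vs"
  obtain ws where ws: "distinct ws" "3 \<le> length ws" "C = cycle_edges ws" "C \<subseteq> ?E"
    using assms(3) unfolding is_cycle_in_def by blast
  have ws_vs: "set ws \<subseteq> set vs"
    using ws(3,4) Union_cycle_edges[of ws] Union_cycle_edges[of vs] by blast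
  have incident: "{e \<in> ?E. w \<in> e} \<subseteq> C" if "w \<in> set ws" for w
  proof -
    have "{e \<in> C. w \<in> e} \<subseteq> {e \<in> ?E. w \<in> e}" using ws(4) by blast
    moreover have "degree C w = degree ?E w"
      using degree_cycle_edges ws that ws_vs assms by auto
    ultimately have "{e \<in> C. w \<in> e} = {e \<in> ?E. w \<in> e}"
      by (intro card_subset_eq) (auto simp: degree_def)
    then show ?thesis by blast
  qed
  have closed: "b \<in> set ws" if "a \<in> set ws" "{a, b} \<in> ?E" for a b
    using incident[OF that(1)] that Union_cycle_edges[of ws] ws(3) by blast
  obtain w0 where w0: "w0 \<in> set ws" using ws(2) by (cases ws) auto
  have vs_ws: "set vs \<subseteq> set ws"
  proof
    fix v assume "v \<in> set vs"
    then have "(w0, v) \<in> {(a, b). {a, b} \<in> ?E}\<^sup>*"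
      using cycle_edges_connected w0 ws_vs by blast
    then show "v \<in> set ws" by (induction rule: rtrancl_induct) (auto intro: closed w0)
  qed
  have "?E \<subseteq> C"
  proof
    fix e assume e: "e \<in> ?E"
    then obtain a where "a \<in> e"
      using card_cycle_edge[OF assms(1) _ e] assms(2) by fastforce
    moreover have "a \<in> set ws" using e \<open>a \<in> e\<close> Union_cycle_edges[of vs] vs_ws by blast
    ultimately show "e \<in> C" using incident e by blast
  qed
  then show ?thesis using ws(4) by blast
qed

definition hamiltonian_cycle :: "nat \<Rightarrow> nat list \<Rightarrow> bool" where
  "hamiltonian_cycle n vs \<longleftrightarrow> distinct vs \<and> set vs = {1..n} \<and> 3 \<le> length vs"

lemma cycle_graph_iff: "cycle_graph n E \<longleftrightarrow> (\<exists>vs. hamiltonian_cycle n vs \<and> E = cycle_edges vs)"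
  by (auto simp: cycle_graph_def hamiltonian_cycle_def)

lemma unicyclic_cycle_edges:
  assumes "hamiltonian_cycle n vs"
  shows "unicyclic n (cycle_edges vs)"
proof -
  have vs: "distinct vs" "set vs = {1..n}" "3 \<le> length vs"
    using assms by (auto simp: hamiltonian_cycle_def)
  have "graph n (cycle_edges vs)" using graph_cycle_edges vs by simp
  moreover have "connected_graph n (cycle_edges vs)"
    unfolding connected_graph_def using cycle_edges_connected vs(2) by blast
  moreover have "is_cycle_in (cycle_edges vs) (cycle_edges vs)"
    unfolding is_cycle_in_def using vs by blast
  ultimately show ?thesis
    unfolding unicyclic_def using cycle_edges_unique_cycle vs by blast
qed

lemma length_hamiltonian_cycle: "hamiltonian_cycle n vs \<Longrightarrow> length vs = n"
  unfolding hamiltonian_cycle_def by (metis card_atLeastAtMost diff_Suc_1 distinct_card)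

lemma two_switch_reverse_segment:
  assumes "distinct (P @ R)" "2 \<le> length P" "2 \<le> length R"
  shows "interchangeable (cycle_edges (P @ R)) (last R, hd P, last P, hd R)"
    and "two_switch (last R, hd P, last P, hd R) (cycle_edges (P @ R)) = cycle_edges (rev P @ R)"
proof -
  define a where "a = last R"
  define b where "b = hd P"
  define c where "c = last P"
  define d where "d = hd R"
  let ?E = "path_edges P \<union> path_edges R"
  have ne: "P \<noteq> []" "R \<noteq> []" using assms by auto
  have E: "cycle_edges (P @ R) = insert {a, b} (insert {c, d} ?E)"
    using ne by (simp add: cycle_edges_conv_path_edges path_edges_append a_def b_def c_def d_def)
  have E': "cycle_edges (rev P @ R) = insert {a, c} (insert {b, d} ?E)"
    using ne by (simp add: cycle_edges_conv_path_edges path_edges_append path_edges_rev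
        hd_rev last_rev a_def b_def c_def d_def insert_commute)
  have P: "b \<in> set P" "c \<in> set P" and R: "a \<in> set R" "d \<in> set R"
    using ne by (simp_all add: a_def b_def c_def d_def)
  have "set P \<inter> set R = {}" using assms(1) by simp
  \<comment> \<open>Each of the four edges joins the two segments, whereas the edges of \<open>?E\<close> stay inside one.\<close>
  then have new: "{a, b} \<notin> ?E" "{c, d} \<notin> ?E" "{a, c} \<notin> ?E" "{b, d} \<notin> ?E"
    using path_edges_subset[of _ P] path_edges_subset[of _ R] P R by blast+
  have "b \<noteq> c" "a \<noteq> d"
    using assms distinct_hd_neq_last[of P] distinct_hd_neq_last[of R]
    by (auto simp: a_def b_def c_def d_def)
  moreover have "a \<noteq> b" "a \<noteq> c" "d \<noteq> b" "d \<noteq> c" using P R \<open>set P \<inter> set R = {}\<close> by auto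
  ultimately have I: "interchangeable (cycle_edges (P @ R)) (a, b, c, d)"
    unfolding interchangeable_def E using new by (auto simp: doubleton_eq_iff)
  then show "interchangeable (cycle_edges (P @ R)) (last R, hd P, last P, hd R)"
    by (simp add: a_def b_def c_def d_def)
  have "two_switch (a, b, c, d) (cycle_edges (P @ R)) = cycle_edges (rev P @ R)"
    unfolding two_switch_def E' using I E new by auto
  then show "two_switch (last R, hd P, last P, hd R) (cycle_edges (P @ R)) = cycle_edges (rev P @ R)"
    by (simp add: a_def b_def c_def d_def)
qed

definition u_switch_reachable :: "nat \<Rightarrow> nat set set \<Rightarrow> nat set set \<Rightarrow> bool" where
  "u_switch_reachable n G H \<longleftrightarrow> (\<exists>As. u_switch_seq n G As H)"

lemma u_switch_seq_append:
  "u_switch_seq n G As H \<Longrightarrow> u_switch_seq n H Bs K \<Longrightarrow> u_switch_seq n G (As @ Bs) K"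
  by (induction As arbitrary: G) auto

lemma u_switch_reachable_refl [simp]: "u_switch_reachable n G G"
  unfolding u_switch_reachable_def using u_switch_seq.simps(1) by blast

lemma u_switch_reachable_trans:
  "u_switch_reachable n G H \<Longrightarrow> u_switch_reachable n H K \<Longrightarrow> u_switch_reachable n G K"
  unfolding u_switch_reachable_def using u_switch_seq_append by blast

lemma u_switch_reachable_u_switch: "u_switch n G A \<Longrightarrow> u_switch_reachable n G (two_switch A G)"
  unfolding u_switch_reachable_def by (rule exI[of _ "[A]"]) simp

lemma u_switch_reachable_reverse_segment:
  assumes "hamiltonian_cycle n (xs @ P @ Q)" "xs \<noteq> []"
  shows "u_switch_reachable n (cycle_edges (xs @ P @ Q)) (cycle_edges (xs @ rev P @ Q))"
proof (cases "2 \<le> length P \<and> 2 \<le> length (Q @ xs)")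
  case True
  let ?A = "(last (Q @ xs), hd P, last P, hd (Q @ xs))"
  have rotate: "cycle_edges (xs @ ys @ Q) = cycle_edges (ys @ Q @ xs)" for ys
    using cycle_edges_append_commute[of xs "ys @ Q"] by simp
  have "distinct (P @ Q @ xs)" using assms(1) by (auto simp: hamiltonian_cycle_def)
  then have "interchangeable (cycle_edges (P @ Q @ xs)) ?A"
    and switch: "two_switch ?A (cycle_edges (P @ Q @ xs)) = cycle_edges (rev P @ Q @ xs)"
    using two_switch_reverse_segment[of P "Q @ xs"] True by auto
  moreover have "hamiltonian_cycle n (xs @ rev P @ Q)"
    using assms(1) by (auto simp: hamiltonian_cycle_def)
  ultimately have "u_switch n (cycle_edges (P @ Q @ xs)) ?A"
    unfolding u_switch_def using assms(1) unicyclic_cycle_edges rotate by metis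
  then show ?thesis using u_switch_reachable_u_switch switch rotate by metis
next
  case False
  have "cycle_edges (xs @ rev P @ Q) = cycle_edges (xs @ P @ Q)"
  proof (cases "2 \<le> length P")
    case False
    then have "rev P = P" by (cases P) (auto simp: not_less_eq_eq)
    then show ?thesis by simp
  next
    case True
    with \<open>\<not> (2 \<le> length P \<and> 2 \<le> length (Q @ xs))\<close> assms(2)
    obtain x where "xs = [x]" "Q = []" by (cases xs) (auto simp: not_less_eq_eq)
    then show ?thesis
      using cycle_edges_append_commute[of xs "rev P"] cycle_edges_rev[of "x # P"] by simp
  qed
  then show ?thesis by simp
qed

lemma extend_common_prefix:
  assumes vs: "hamiltonian_cycle n vs" and ws: "hamiltonian_cycle n ws"
    and prefix: "take k vs = take k ws" and "0 < k" "k < length ws"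
  obtains vs' where "hamiltonian_cycle n vs'" "take (Suc k) vs' = take (Suc k) ws"
    "u_switch_reachable n (cycle_edges vs) (cycle_edges vs')"
proof -
  define x where "x = ws ! k"
  define xs where "xs = take k vs"
  have "x \<in> set (drop k ws)" using assms(5) hd_drop_conv_nth[of k ws] unfolding x_def
    by (metis drop_eq_Nil leD list.set_sel(1))
  then have "x \<notin> set xs"
    using ws prefix distinct_append[of "take k ws" "drop k ws"]
    by (auto simp: xs_def hamiltonian_cycle_def)
  moreover have "x \<in> set vs" using vs ws assms(5) by (auto simp: x_def hamiltonian_cycle_def)
  ultimately have "x \<in> set (drop k vs)" using append_take_drop_id[of k vs] xs_def
    by (metis Un_iff set_append)
  then obtain P0 Q where "drop k vs = P0 @ x # Q" using split_list by metis
  then have split: "vs = xs @ (P0 @ [x]) @ Q"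
    unfolding xs_def by (metis append_take_drop_id append.assoc append_Cons append_Nil)
  have "length vs = length ws" using vs ws by (simp add: length_hamiltonian_cycle)
  then have "length xs = k" using assms(5) by (simp add: xs_def)
  then have "xs \<noteq> []" using \<open>0 < k\<close> by auto
  let ?vs' = "xs @ rev (P0 @ [x]) @ Q"
  show ?thesis
  proof
    show "hamiltonian_cycle n ?vs'" using vs split by (auto simp: hamiltonian_cycle_def)
    show "take (Suc k) ?vs' = take (Suc k) ws"
      using \<open>length xs = k\<close> prefix assms(5) by (simp add: xs_def x_def take_Suc_conv_app_nth)
    show "u_switch_reachable n (cycle_edges vs) (cycle_edges ?vs')"
      using u_switch_reachable_reverse_segment[of n xs "P0 @ [x]" Q] vs split \<open>xs \<noteq> []\<close> by simp
  qed
qed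

lemma u_switch_reachable_common_prefix:
  assumes "hamiltonian_cycle n vs" "hamiltonian_cycle n ws" "take k vs = take k ws" "0 < k"
  shows "u_switch_reachable n (cycle_edges vs) (cycle_edges ws)"
  using assms
proof (induction "length ws - k" arbitrary: k vs rule: less_induct)
  case less
  show ?case
  proof (cases "k < length ws")
    case True
    then obtain vs' where "hamiltonian_cycle n vs'" "take (Suc k) vs' = take (Suc k) ws"
      and reach: "u_switch_reachable n (cycle_edges vs) (cycle_edges vs')"
      using extend_common_prefix less.prems by blast
    then have "u_switch_reachable n (cycle_edges vs') (cycle_edges ws)"
      using less.hyps[of "Suc k" vs'] less.prems True by simp
    with reach show ?thesis by (rule u_switch_reachable_trans)
  next
    case False
    moreover have "length vs = length ws" using less.prems by (simp add: length_hamiltonian_cycle)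
    ultimately have "vs = ws" using less.prems(3) by simp
    then show ?thesis by simp
  qed
qed

lemma u_switch_reachable_hamiltonian_cycles:
  assumes vs: "hamiltonian_cycle n vs" and ws: "hamiltonian_cycle n ws"
  shows "u_switch_reachable n (cycle_edges vs) (cycle_edges ws)"
proof -
  have "ws \<noteq> []" using ws by (auto simp: hamiltonian_cycle_def)
  then have "hd ws \<in> set vs" using vs ws by (auto simp: hamiltonian_cycle_def)
  then obtain ys zs where split: "vs = ys @ hd ws # zs" using split_list by metis
  let ?vs' = "hd ws # zs @ ys"
  have "cycle_edges vs = cycle_edges ?vs'"
    unfolding split using cycle_edges_append_commute[of ys "hd ws # zs"] by simp
  moreover have "hamiltonian_cycle n ?vs'" using vs split by (auto simp: hamiltonian_cycle_def)
  moreover have "take 1 ?vs' = take 1 ws" using \<open>ws \<noteq> []\<close> by (cases ws) auto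
  ultimately show ?thesis using u_switch_reachable_common_prefix[of n ?vs' ws 1] ws by simp
qed

theorem theorem3p8:
  fixes n :: nat and C C' :: "nat set set"
  assumes "cycle_graph n C" and "cycle_graph n C'"
    and "same_degree_sequence n C C'"
  shows "\<exists>As. u_switch_seq n C As C'"
proof -
  obtain vs ws where "hamiltonian_cycle n vs" "C = cycle_edges vs"
    and "hamiltonian_cycle n ws" "C' = cycle_edges ws"
    using assms(1,2) unfolding cycle_graph_iff by blast
  then show ?thesis
    using u_switch_reachable_hamiltonian_cycles unfolding u_switch_reachable_def by blast
qed

end
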